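(* Let $T=(V_T,E_T)$ be a finite tree, $r\in V_T$, and $Q\subseteq V_T$ non-empty. Root $T$ at $r$, let $V_Q$ be the set of nodes $u$ whose subtree (w.r.t. root $r$) contains a node of $Q$, let $T_Q$ be the subtree of $T$ induced by $V_Q$, let $A_Q=\{u\in V_Q:\deg_{T_Q}(u)\ge 3\}$, and let $Q'=Q\cup A_Q$. Then $T$ has one or two $Q'$-centroids.
   Context: For a tree $T$ and a set $Q\subseteq V_T$, a node $u\in Q$ is a $Q$-centroid if every connected component of $T-u$ contains at most $|Q|/2$ nodes of $Q$. *)

theory Defs
  imports Main
begin

definition walk_in :: "'a set \<Rightarrow> 'a rel \<Rightarrow> 'a list \<Rightarrow> bool" where
  "walk_in V E xs \<longleftrightarrow> xs \<noteq> [] \<and> set xs \<subseteq> V \<and>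
     (\<forall>i. Suc i < length xs \<longrightarrow> (xs ! i, xs ! Suc i) \<in> E)"

definition connected_graph :: "'a set \<Rightarrow> 'a rel \<Rightarrow> bool" where
  "connected_graph V E \<longleftrightarrow>
     (\<forall>u\<in>V. \<forall>v\<in>V. \<exists>xs. walk_in V E xs \<and> hd xs = u \<and> last xs = v)"

text \<open>A cycle: closed walk v0 ... vk = v0 with k \<ge> 3 and v0,...,v(k-1) distinct.\<close>
definition is_cycle :: "'a set \<Rightarrow> 'a rel \<Rightarrow> 'a list \<Rightarrow> bool" where
  "is_cycle V E xs \<longleftrightarrow> walk_in V E xs \<and> length xs \<ge> 4 \<and> hd xs = last xs
     \<and> distinct (tl xs)"

definition is_tree :: "'a set \<Rightarrow> 'a rel \<Rightarrow> bool" where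
  "is_tree V E \<longleftrightarrow> finite V \<and> V \<noteq> {} \<and> E \<subseteq> V \<times> V \<and> sym E \<and> irrefl E
     \<and> connected_graph V E \<and> (\<nexists>xs. is_cycle V E xs)"

definition comp_minus :: "'a set \<Rightarrow> 'a rel \<Rightarrow> 'a \<Rightarrow> 'a \<Rightarrow> 'a set" where
  "comp_minus V E u v =
     {w. \<exists>xs. walk_in (V - {u}) E xs \<and> hd xs = v \<and> last xs = w}"

definition is_centroid :: "'a set \<Rightarrow> 'a rel \<Rightarrow> 'a set \<Rightarrow> 'a \<Rightarrow> bool" where
  "is_centroid V E Q u \<longleftrightarrow> u \<in> Q \<and>
     (\<forall>v\<in>V - {u}. 2 * card (Q \<inter> comp_minus V E u v) \<le> card Q)"

text \<open>Subtree of u w.r.t. root r: nodes w such that u lies on the path from r to w,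
  i.e. every walk from r to w passes through u.\<close>
definition rooted_subtree :: "'a set \<Rightarrow> 'a rel \<Rightarrow> 'a \<Rightarrow> 'a \<Rightarrow> 'a set" where
  "rooted_subtree V E r u =
     {w\<in>V. \<forall>xs. walk_in V E xs \<and> hd xs = r \<and> last xs = w \<longrightarrow> u \<in> set xs}"

definition VQ :: "'a set \<Rightarrow> 'a rel \<Rightarrow> 'a \<Rightarrow> 'a set \<Rightarrow> 'a set" where
  "VQ V E r Q = {u\<in>V. rooted_subtree V E r u \<inter> Q \<noteq> {}}"

definition deg_induced :: "'a set \<Rightarrow> 'a rel \<Rightarrow> 'a \<Rightarrow> nat" where
  "deg_induced W E u = card {v\<in>W. (u, v) \<in> E}"

definition AQ :: "'a set \<Rightarrow> 'a rel \<Rightarrow> 'a \<Rightarrow> 'a set \<Rightarrow> 'a set" where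
  "AQ V E r Q = {u\<in>VQ V E r Q. deg_induced (VQ V E r Q) E u \<ge> 3}"

end

theory Submission
  imports Defs
begin

text \<open>Two distinct \<open>Q'\<close>-centroids \<open>u\<close>, \<open>v\<close> split \<open>Q'\<close> exactly in half: each node of
  \<open>Q'\<close> lies in the component of \<open>T - u\<close> containing \<open>v\<close> or in that of \<open>T - v\<close> containing \<open>u\<close>,
  and each of these carries at most half of \<open>Q'\<close>. A third centroid \<open>c\<close> misses one of them,
  say the first; then the components of \<open>T - u\<close> containing \<open>v\<close> and \<open>c\<close> carry half of \<open>Q'\<close>
  each, and \<open>u\<close> itself is one node too many.

  For existence, the only property of \<open>Q'\<close> used is that it lies in the connected subtree
  \<open>T\<^sub>Q\<close> and contains every node of degree at least three in \<open>T\<^sub>Q\<close>. Take \<open>q \<in> Q'\<close> and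
  a component \<open>C\<close> of \<open>T - q\<close> carrying more than half of \<open>Q'\<close>, and induct on \<open>|C|\<close>.
  Walking from \<open>q\<close> into \<open>C\<close> inside \<open>T\<^sub>Q\<close>, the walk cannot branch before it meets a node
  \<open>x \<in> Q'\<close>, so no node of \<open>Q' \<inter> C\<close> lies on the side of \<open>x\<close> facing \<open>q\<close>. If \<open>x\<close> is not
  a centroid, its heavy component therefore avoids \<open>q\<close>, and is then a proper subset of \<open>C\<close>.\<close>

definition reachable_in :: "'a set \<Rightarrow> 'a rel \<Rightarrow> 'a \<Rightarrow> 'a \<Rightarrow> bool" where
  "reachable_in S E x y \<longleftrightarrow> (\<exists>xs. walk_in S E xs \<and> hd xs = x \<and> last xs = y)"

lemma walk_in_successively:
  "walk_in S E xs \<longleftrightarrow> xs \<noteq> [] \<and> set xs \<subseteq> S \<and> successively (\<lambda>x y. (x, y) \<in> E) xs"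
  by (simp add: walk_in_def successively_conv_nth)

lemma walk_in_mono: "walk_in S E xs \<Longrightarrow> set xs \<subseteq> S' \<Longrightarrow> walk_in S' E xs"
  by (simp add: walk_in_successively)

lemma walk_in_Diff_singleton: "walk_in S E xs \<Longrightarrow> x \<notin> set xs \<Longrightarrow> walk_in (S - {x}) E xs"
  unfolding walk_in_successively by auto

lemma walk_in_appendD1: "walk_in S E (ys @ zs) \<Longrightarrow> ys \<noteq> [] \<Longrightarrow> walk_in S E ys"
  unfolding walk_in_successively by (auto simp: successively_append_iff)

lemma walk_in_split:
  assumes "walk_in S E (ys @ z # zs)" "ys \<noteq> []" "zs \<noteq> []"
  shows "walk_in S E ys" "walk_in S E zs" "(last ys, z) \<in> E" "(z, hd zs) \<in> E"
  using assms unfolding walk_in_successively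
  by (auto simp: successively_append_iff neq_Nil_conv)

lemma walk_in_reachable_in: "walk_in S E xs \<Longrightarrow> reachable_in S E (hd xs) (last xs)"
  unfolding reachable_in_def by blast

lemma reachable_in_refl: "x \<in> S \<Longrightarrow> reachable_in S E x x"
  unfolding reachable_in_def by (intro exI[of _ "[x]"]) (simp add: walk_in_successively)

lemma reachable_in_mem: "reachable_in S E x y \<Longrightarrow> x \<in> S \<and> y \<in> S"
  unfolding reachable_in_def walk_in_successively by (metis hd_in_set last_in_set subsetD)

lemma reachable_in_mono: "reachable_in S E x y \<Longrightarrow> S \<subseteq> S' \<Longrightarrow> reachable_in S' E x y"
  unfolding reachable_in_def walk_in_successively by blast

lemma reachable_in_sym:
  assumes "sym E" and "reachable_in S E x y"
  shows "reachable_in S E y x"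
proof -
  obtain xs where xs: "walk_in S E xs" "hd xs = x" "last xs = y"
    using assms(2) reachable_in_def by metis
  have "successively (\<lambda>x y. (x, y) \<in> E) (rev xs)"
    using xs(1) assms(1) unfolding walk_in_successively successively_rev
    by (metis (no_types, lifting) successively_mono symD)
  then have "walk_in S E (rev xs)"
    using xs(1) by (simp add: walk_in_successively)
  then show ?thesis
    unfolding reachable_in_def using xs by (intro exI[of _ "rev xs"]) (simp add: hd_rev last_rev)
qed

lemma reachable_in_trans:
  assumes "reachable_in S E x y" and "reachable_in S E y z"
  shows "reachable_in S E x z"
proof -
  obtain xs where xs: "walk_in S E xs" "hd xs = x" "last xs = y"
    using assms(1) reachable_in_def by metis
  obtain ys where ys: "walk_in S E ys" "hd ys = y" "last ys = z"
    using assms(2) reachable_in_def by metis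
  obtain ys' where ys': "ys = y # ys'"
    using ys by (metis list.collapse walk_in_successively)
  show ?thesis
  proof (cases "ys' = []")
    case True
    then show ?thesis using xs ys ys' unfolding reachable_in_def by auto
  next
    case False
    have "walk_in S E (xs @ ys')"
      using xs ys ys' False
      unfolding walk_in_successively by (auto simp: successively_append_iff successively_Cons)
    then show ?thesis
      unfolding reachable_in_def using xs ys ys' False
      by (intro exI[of _ "xs @ ys'"]) (auto simp: walk_in_successively)
  qed
qed

lemma reachable_in_edge: "(x, y) \<in> E \<Longrightarrow> x \<in> S \<Longrightarrow> y \<in> S \<Longrightarrow> reachable_in S E x y"
  unfolding reachable_in_def by (intro exI[of _ "[x, y]"]) (simp add: walk_in_successively)

lemma reachable_in_step:
  "reachable_in S E x y \<Longrightarrow> (y, z) \<in> E \<Longrightarrow> z \<in> S \<Longrightarrow> reachable_in S E x z"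
  by (meson reachable_in_edge reachable_in_mem reachable_in_trans)

lemma reachable_in_distinct_walk:
  assumes "reachable_in S E x y"
  obtains xs where "walk_in S E xs" "hd xs = x" "last xs = y" "distinct xs"
proof -
  let ?P = "\<lambda>xs. walk_in S E xs \<and> hd xs = x \<and> last xs = y"
  obtain xs0 where "?P xs0"
    using assms reachable_in_def by metis
  then obtain xs where xs: "?P xs" and shortest: "\<And>ys. ?P ys \<Longrightarrow> length xs \<le> length ys"
    using ex_has_least_nat[of ?P xs0 length] by blast
  have "distinct xs"
  proof (rule ccontr)
    assume "\<not> distinct xs"
    then obtain as bs cs c where split: "xs = as @ [c] @ bs @ [c] @ cs"
      using not_distinct_decomp by blast
    have "?P (as @ [c] @ cs)"
      using xs unfolding split walk_in_successively
      by (auto simp: successively_append_iff successively_Cons hd_append split: if_splits)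
    then show False
      using shortest[of "as @ [c] @ cs"] split by simp
  qed
  then show ?thesis
    using xs that by blast
qed

lemma reachable_in_first_step:
  assumes "reachable_in S E x y" and "x \<noteq> y"
  obtains b where "(x, b) \<in> E" and "reachable_in (S - {x}) E b y"
proof -
  obtain xs where xs: "walk_in S E xs" "hd xs = x" "last xs = y" "distinct xs"
    using assms(1) by (rule reachable_in_distinct_walk)
  obtain xs' where xs': "xs = x # xs'"
    using xs by (metis list.collapse walk_in_successively)
  have "xs' \<noteq> []"
    using xs xs' assms(2) by auto
  moreover have "walk_in (S - {x}) E xs'" and "(x, hd xs') \<in> E"
    using xs xs' \<open>xs' \<noteq> []\<close> unfolding walk_in_successively by (auto simp: successively_Cons)
  ultimately show ?thesis
    using that xs xs' unfolding reachable_in_def by auto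
qed

lemma connected_graph_iff_reachable_in:
  "connected_graph V E \<longleftrightarrow> (\<forall>u\<in>V. \<forall>v\<in>V. reachable_in V E u v)"
  by (simp add: connected_graph_def reachable_in_def)

lemma comp_minus_eq_reachable_in: "comp_minus V E u v = {w. reachable_in (V - {u}) E v w}"
  by (simp add: comp_minus_def reachable_in_def)

lemma comp_minus_subset: "comp_minus V E u v \<subseteq> V - {u}"
  unfolding comp_minus_eq_reachable_in using reachable_in_mem by fast

lemma self_in_comp_minus: "v \<in> V - {u} \<Longrightarrow> v \<in> comp_minus V E u v"
  unfolding comp_minus_eq_reachable_in by (simp add: reachable_in_refl)

lemma self_in_comp_minus_if_mem: "w \<in> comp_minus V E u v \<Longrightarrow> v \<in> comp_minus V E u v"
  unfolding comp_minus_eq_reachable_in by (meson mem_Collect_eq reachable_in_mem reachable_in_refl)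

lemma heavy_subsets_intersect:
  assumes "finite P" "A \<subseteq> P" "B \<subseteq> P" "card P < 2 * card A" "card P < 2 * card B"
  shows "A \<inter> B \<noteq> {}"
proof
  assume "A \<inter> B = {}"
  then have "card A + card B = card (A \<union> B)"
    using assms(1-3) by (metis card_Un_disjoint finite_subset)
  also have "\<dots> \<le> card P"
    using assms(1-3) by (intro card_mono) auto
  finally show False
    using assms(4,5) by linarith
qed

locale tree =
  fixes V :: "'a set" and E :: "'a rel"
  assumes is_tree: "is_tree V E"
begin

lemma finite_V: "finite V"
  using is_tree unfolding is_tree_def by simp

lemma sym_E: "sym E"
  using is_tree unfolding is_tree_def by simp

lemma edge_mem_V: "(x, y) \<in> E \<Longrightarrow> x \<in> V \<and> y \<in> V"
proof -
  have "E \<subseteq> V \<times> V"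
    using is_tree unfolding is_tree_def by simp
  then show "(x, y) \<in> E \<Longrightarrow> x \<in> V \<and> y \<in> V"
    by blast
qed

lemma reachable_in_V: "x \<in> V \<Longrightarrow> y \<in> V \<Longrightarrow> reachable_in V E x y"
  using is_tree unfolding is_tree_def connected_graph_iff_reachable_in by simp

lemma no_cycle: "\<not> is_cycle V E xs"
  using is_tree unfolding is_tree_def by simp

lemma finite_comp_minus: "finite (comp_minus V E u v)"
  by (rule finite_subset[OF comp_minus_subset finite_Diff[OF finite_V]])

lemma comp_minus_eq_if_mem:
  assumes "w \<in> comp_minus V E u v"
  shows "comp_minus V E u w = comp_minus V E u v"
proof -
  have vw: "reachable_in (V - {u}) E v w"
    using assms by (simp add: comp_minus_eq_reachable_in)
  have wv: "reachable_in (V - {u}) E w v"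
    using reachable_in_sym[OF sym_E vw] .
  show ?thesis
    unfolding comp_minus_eq_reachable_in
    using reachable_in_trans[OF vw] reachable_in_trans[OF wv] by blast
qed

lemma comp_minus_disjoint:
  assumes "w \<notin> comp_minus V E u v"
  shows "comp_minus V E u w \<inter> comp_minus V E u v = {}"
proof (rule ccontr)
  assume "\<not> ?thesis"
  then obtain t where "reachable_in (V - {u}) E w t" "reachable_in (V - {u}) E v t"
    by (auto simp: comp_minus_eq_reachable_in)
  then have "reachable_in (V - {u}) E v w"
    using reachable_in_trans reachable_in_sym[OF sym_E] by metis
  then show False
    using assms by (simp add: comp_minus_eq_reachable_in)
qed

text \<open>This is the only place where acyclicity is used.\<close>

lemma neighbours_not_reachable_in:
  assumes "(u, a) \<in> E" and "(u, b) \<in> E" and "a \<noteq> b"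
  shows "\<not> reachable_in (V - {u}) E a b"
proof
  assume "reachable_in (V - {u}) E a b"
  then obtain ps where ps: "walk_in (V - {u}) E ps" "hd ps = a" "last ps = b" "distinct ps"
    by (rule reachable_in_distinct_walk)
  have "ps \<noteq> []"
    using ps(1) by (simp add: walk_in_successively)
  have "length ps \<noteq> 1"
    using ps assms(3) by (auto simp: length_Suc_conv)
  moreover have "length ps \<noteq> 0"
    using \<open>ps \<noteq> []\<close> by simp
  ultimately have len: "length ps \<ge> 2"
    by arith
  have "(b, u) \<in> E"
    using assms(2) sym_E by (meson symD)
  moreover have "u \<in> V"
    using edge_mem_V[OF assms(1)] by simp
  ultimately have "walk_in V E (u # ps @ [u])"
    using ps \<open>ps \<noteq> []\<close> assms(1) unfolding walk_in_successively
    by (auto simp: successively_append_iff successively_Cons)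
  moreover have "u \<notin> set ps"
    using ps(1) unfolding walk_in_successively by blast
  then have "distinct (tl (u # ps @ [u]))"
    using ps(4) by simp
  ultimately have "is_cycle V E (u # ps @ [u])"
    using len unfolding is_cycle_def by auto
  then show False
    using no_cycle by blast
qed

lemma comp_minus_cover:
  assumes "u \<in> V" "v \<in> V" "u \<noteq> v" "w \<in> V"
  shows "w \<in> comp_minus V E u v \<or> w \<in> comp_minus V E v u"
proof (cases "w = u \<or> w = v")
  case True
  then show ?thesis
    using assms self_in_comp_minus[of u V v] self_in_comp_minus[of v V u] by auto
next
  case False
  obtain xs where xs: "walk_in V E xs" "hd xs = w" "last xs = u" "distinct xs"
    using reachable_in_V[OF assms(4,1)] by (rule reachable_in_distinct_walk)
  show ?thesis
  proof (cases "v \<in> set xs")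
    case False
    then have "reachable_in (V - {v}) E w u"
      using xs walk_in_Diff_singleton walk_in_reachable_in by metis
    then show ?thesis
      using reachable_in_sym[OF sym_E] by (simp add: comp_minus_eq_reachable_in)
  next
    case True
    then obtain ys zs where split: "xs = ys @ v # zs"
      by (meson split_list)
    have "zs \<noteq> []"
      using xs(3) assms(3) split by auto
    then have "u \<in> set zs"
      using xs(3) split last_in_set by fastforce
    then have "u \<notin> set (ys @ [v])"
      using xs(4) split assms(3) by auto
    moreover have "walk_in V E (ys @ [v])"
      using walk_in_appendD1[of V E "ys @ [v]" zs] xs split by simp
    ultimately have "reachable_in (V - {u}) E (hd (ys @ [v])) (last (ys @ [v]))"
      by (intro walk_in_reachable_in walk_in_Diff_singleton)
    moreover have "hd (ys @ [v]) = w"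
      using xs(2) split by (cases ys) auto
    ultimately have "reachable_in (V - {u}) E w v"
      by simp
    then show ?thesis
      using reachable_in_sym[OF sym_E] by (simp add: comp_minus_eq_reachable_in)
  qed
qed

lemma comp_minus_edge_disjoint:
  assumes "(x, y) \<in> E"
  shows "comp_minus V E x y \<inter> comp_minus V E y x = {}"
proof (rule ccontr)
  assume "\<not> ?thesis"
  then obtain w where yw: "reachable_in (V - {x}) E y w" and xw: "reachable_in (V - {y}) E x w"
    by (auto simp: comp_minus_eq_reachable_in)
  have "x \<noteq> w"
    using reachable_in_mem[OF yw] by blast
  with xw obtain b where b: "(x, b) \<in> E" "reachable_in (V - {y} - {x}) E b w"
    by (rule reachable_in_first_step)
  have "b \<noteq> y"
    using reachable_in_mem[OF b(2)] by simp
  have "reachable_in (V - {x}) E b w"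
    by (rule reachable_in_mono[OF b(2)]) blast
  then have "reachable_in (V - {x}) E y b"
    using reachable_in_trans[OF yw] reachable_in_sym[OF sym_E] by blast
  then show False
    using neighbours_not_reachable_in[OF assms b(1)] \<open>b \<noteq> y\<close> by blast
qed

lemma comp_minus_psubset_swap:
  assumes "u \<in> V" "v \<in> V - {u}" "w \<in> V - {u}" and "v \<notin> comp_minus V E u w"
  shows "comp_minus V E u w \<subset> comp_minus V E v u"
proof -
  have "comp_minus V E u w \<subseteq> comp_minus V E v u"
  proof
    fix t
    assume t: "t \<in> comp_minus V E u w"
    then have "t \<notin> comp_minus V E u v"
      using comp_minus_disjoint[OF assms(4)] by blast
    moreover have "t \<in> V" "t \<noteq> u"
      using t comp_minus_subset[of V E u w] by auto
    ultimately show "t \<in> comp_minus V E v u"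
      using comp_minus_cover[of u v t] assms(1,2) by blast
  qed
  moreover have "u \<in> comp_minus V E v u"
    using self_in_comp_minus[of u V v] assms(1,2) by blast
  moreover have "u \<notin> comp_minus V E u w"
    using comp_minus_subset[of V E u w] by blast
  ultimately show ?thesis
    by blast
qed

lemma comp_minus_edge_closed:
  assumes "x \<in> comp_minus V E u v" and "(x, y) \<in> E" and "y \<noteq> u"
  shows "y \<in> comp_minus V E u v"
proof -
  have "y \<in> V - {u}"
    using edge_mem_V[OF assms(2)] assms(3) by blast
  then show ?thesis
    using assms(1) reachable_in_step[OF _ assms(2)] by (simp add: comp_minus_eq_reachable_in)
qed

lemma distinct_walk_mem_every_walk:
  assumes "walk_in V E ps" "hd ps = x" "last ps = y" "distinct ps" "z \<in> set ps"
    and "walk_in V E xs" "hd xs = x" "last xs = y"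
  shows "z \<in> set xs"
proof (rule ccontr)
  assume "z \<notin> set xs"
  moreover have "xs \<noteq> []"
    using assms(6) walk_in_successively by blast
  then have "x \<in> set xs" "y \<in> set xs"
    using assms(7,8) hd_in_set last_in_set by blast+
  ultimately have "z \<noteq> x" "z \<noteq> y"
    by auto
  obtain ys zs where split: "ps = ys @ z # zs"
    using split_list[OF assms(5)] by blast
  have "ys \<noteq> []" "zs \<noteq> []"
    using assms(2,3) split \<open>z \<noteq> x\<close> \<open>z \<noteq> y\<close> by auto
  have "z \<notin> set ys" "z \<notin> set zs"
    using assms(4) split by auto
  note pieces = walk_in_split[OF assms(1)[unfolded split] \<open>ys \<noteq> []\<close> \<open>zs \<noteq> []\<close>]
  have "reachable_in (V - {z}) E (hd ys) (last ys)" "reachable_in (V - {z}) E (hd zs) (last zs)"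
    using walk_in_reachable_in[OF walk_in_Diff_singleton[OF pieces(1) \<open>z \<notin> set ys\<close>]]
      walk_in_reachable_in[OF walk_in_Diff_singleton[OF pieces(2) \<open>z \<notin> set zs\<close>]] .
  then have xl: "reachable_in (V - {z}) E x (last ys)" and hy: "reachable_in (V - {z}) E (hd zs) y"
    using assms(2,3) split \<open>ys \<noteq> []\<close> \<open>zs \<noteq> []\<close> by simp_all
  have "reachable_in (V - {z}) E x y"
    using walk_in_reachable_in[OF walk_in_Diff_singleton[OF assms(6) \<open>z \<notin> set xs\<close>]] assms(7,8)
    by simp
  then have "reachable_in (V - {z}) E (last ys) (hd zs)"
    using reachable_in_trans[OF reachable_in_sym[OF sym_E xl]]
      reachable_in_trans[OF _ reachable_in_sym[OF sym_E hy]] by blast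
  moreover have "last ys \<noteq> hd zs"
  proof -
    have "last ys \<in> set ys" "hd zs \<in> set zs"
      using \<open>ys \<noteq> []\<close> \<open>zs \<noteq> []\<close> by simp_all
    then show ?thesis
      using assms(4) split by auto
  qed
  moreover have "(z, last ys) \<in> E"
    using pieces(3) sym_E by (meson symD)
  ultimately show False
    using neighbours_not_reachable_in[OF _ pieces(4)] by blast
qed

lemma two_centroids_halve:
  assumes "P \<subseteq> V" "is_centroid V E P u" "is_centroid V E P v" "u \<noteq> v"
  shows "2 * card (P \<inter> comp_minus V E u v) = card P"
    and "P \<inter> comp_minus V E u v \<inter> comp_minus V E v u = {}"
proof -
  have "u \<in> V" "v \<in> V"
    using assms(1-3) unfolding is_centroid_def by auto
  let ?A = "P \<inter> comp_minus V E u v" and ?B = "P \<inter> comp_minus V E v u"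
  have A: "2 * card ?A \<le> card P"
    using assms(2) \<open>v \<in> V\<close> assms(4) unfolding is_centroid_def by blast
  have B: "2 * card ?B \<le> card P"
    using assms(3) \<open>u \<in> V\<close> assms(4) unfolding is_centroid_def by blast
  have "?A \<union> ?B = P"
    using comp_minus_cover[OF \<open>u \<in> V\<close> \<open>v \<in> V\<close> assms(4)] assms(1) by blast
  moreover have "finite ?A" "finite ?B"
    using finite_comp_minus by simp_all
  ultimately have sum: "card P + card (?A \<inter> ?B) = card ?A + card ?B"
    using card_Un_Int by metis
  then have "card (?A \<inter> ?B) = 0"
    using A B by linarith
  then have "?A \<inter> ?B = {}"
    using \<open>finite ?A\<close> by simp
  then show "P \<inter> comp_minus V E u v \<inter> comp_minus V E v u = {}"
    by blast
  show "2 * card ?A = card P"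
    using sum A B by linarith
qed

lemma third_centroid_in_comp_minus:
  assumes "P \<subseteq> V" "is_centroid V E P u" "is_centroid V E P v" "is_centroid V E P c"
    and "u \<noteq> v" "u \<noteq> c" "v \<noteq> c"
  shows "c \<in> comp_minus V E u v"
proof (rule ccontr)
  assume c: "c \<notin> comp_minus V E u v"
  let ?A = "P \<inter> comp_minus V E u v" and ?B = "P \<inter> comp_minus V E u c"
  have "?A \<inter> ?B = {}"
    using comp_minus_disjoint[OF c] by blast
  moreover have "u \<notin> ?A \<union> ?B"
    using comp_minus_subset[of V E u v] comp_minus_subset[of V E u c] by blast
  moreover have "finite ?A" "finite ?B"
    using finite_comp_minus by simp_all
  ultimately have "card (insert u (?A \<union> ?B)) = Suc (card ?A + card ?B)"
    by (simp add: card_Un_disjoint)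
  moreover have "insert u (?A \<union> ?B) \<subseteq> P"
    using assms(2) unfolding is_centroid_def by blast
  then have "card (insert u (?A \<union> ?B)) \<le> card P"
    using assms(1) finite_V by (meson card_mono finite_subset)
  ultimately show False
    using two_centroids_halve(1)[OF assms(1,2,3,5)] two_centroids_halve(1)[OF assms(1,2,4,6)]
    by linarith
qed

lemma card_centroids_le_2:
  assumes "P \<subseteq> V"
  shows "card {u \<in> V. is_centroid V E P u} \<le> 2"
proof (cases "\<exists>u\<in>{u \<in> V. is_centroid V E P u}. \<exists>v\<in>{u \<in> V. is_centroid V E P u}. u \<noteq> v")
  case True
  then obtain u v where u: "is_centroid V E P u" and v: "is_centroid V E P v" and "u \<noteq> v"
    by blast
  have "c = u \<or> c = v" if c: "is_centroid V E P c" for c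
  proof (rule ccontr)
    assume "\<not> (c = u \<or> c = v)"
    then have "c \<in> comp_minus V E u v \<inter> comp_minus V E v u" and "c \<in> P"
      using third_centroid_in_comp_minus[OF assms u v c] third_centroid_in_comp_minus[OF assms v u c]
        \<open>u \<noteq> v\<close> c unfolding is_centroid_def by auto
    then show False
      using two_centroids_halve(2)[OF assms u v \<open>u \<noteq> v\<close>] by blast
  qed
  then have "{u \<in> V. is_centroid V E P u} \<subseteq> {u, v}"
    by blast
  then have "card {u \<in> V. is_centroid V E P u} \<le> card {u, v}"
    by (rule card_mono[rotated]) simp
  also have "\<dots> = 2"
    using \<open>u \<noteq> v\<close> by simp
  finally show ?thesis .
next
  case False
  then have "card {u \<in> V. is_centroid V E P u} \<le> 1"
    using card_le_Suc0_iff_eq[of "{u \<in> V. is_centroid V E P u}"] finite_V by simp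
  then show ?thesis
    by simp
qed

context
  fixes P W :: "'a set"
  assumes P_subset_W: "P \<subseteq> W" and W_subset_V: "W \<subseteq> V" and connected_W: "connected_graph W E"
    and branching_in_P: "\<And>x. x \<in> W \<Longrightarrow> 3 \<le> deg_induced W E x \<Longrightarrow> x \<in> P"
begin

lemma neighbour_in_W_towards:
  assumes "x \<in> W" "z \<in> W" "z \<noteq> x"
  obtains y where "y \<in> W" "(x, y) \<in> E" "z \<in> comp_minus V E x y"
proof -
  have "reachable_in W E x z"
    using connected_W assms(1,2) unfolding connected_graph_iff_reachable_in by blast
  then obtain y where xy: "(x, y) \<in> E" and yz: "reachable_in (W - {x}) E y z"
    using assms(3) by (metis reachable_in_first_step)
  have "reachable_in (V - {x}) E y z"
    by (rule reachable_in_mono[OF yz]) (use W_subset_V in blast)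
  moreover have "y \<in> W"
    using reachable_in_mem[OF yz] by blast
  ultimately show ?thesis
    using that xy by (simp add: comp_minus_eq_reachable_in)
qed

lemma three_neighbours_in_W_imp_in_P:
  assumes "x \<in> W" "{y1, y2, y3} \<subseteq> W" "(x, y1) \<in> E" "(x, y2) \<in> E" "(x, y3) \<in> E"
    and "y1 \<noteq> y2" "y1 \<noteq> y3" "y2 \<noteq> y3"
  shows "x \<in> P"
proof -
  have "finite {v \<in> W. (x, v) \<in> E}"
    using finite_V W_subset_V by (simp add: finite_subset)
  moreover have "{y1, y2, y3} \<subseteq> {v \<in> W. (x, v) \<in> E}"
    using assms(2-5) by blast
  ultimately have "card {y1, y2, y3} \<le> deg_induced W E x"
    unfolding deg_induced_def by (rule card_mono)
  moreover have "card {y1, y2, y3} = 3"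
    using assms(6-8) by simp
  ultimately show ?thesis
    using branching_in_P[OF assms(1)] by simp
qed

lemma P_outside_branch_of_non_branching:
  assumes "x \<in> W" "x \<notin> P" "q \<in> W" "q \<noteq> x" "(x, y) \<in> E" "y \<in> W"
    and "y \<notin> comp_minus V E x q"
  shows "P \<inter> comp_minus V E y x \<subseteq> comp_minus V E x q"
proof
  fix p
  assume p: "p \<in> P \<inter> comp_minus V E y x"
  have "p \<noteq> x" "p \<in> W"
    using p assms(2) P_subset_W by auto
  obtain y1 where "y1 \<in> W" "(x, y1) \<in> E" and p_y1: "p \<in> comp_minus V E x y1"
    using neighbour_in_W_towards[OF assms(1) \<open>p \<in> W\<close> \<open>p \<noteq> x\<close>] by blast
  obtain y2 where "y2 \<in> W" "(x, y2) \<in> E" and q_y2: "q \<in> comp_minus V E x y2"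
    using neighbour_in_W_towards[OF assms(1,3,4)] by blast
  have y2_q_side: "comp_minus V E x y2 = comp_minus V E x q"
    using comp_minus_eq_if_mem[OF q_y2] by simp
  have "y2 \<in> comp_minus V E x y2"
    using q_y2 by (rule self_in_comp_minus_if_mem)
  have "y \<noteq> y1"
    using p p_y1 comp_minus_edge_disjoint[OF assms(5)] by blast
  moreover have "y \<noteq> y2"
    using \<open>y2 \<in> comp_minus V E x y2\<close> y2_q_side assms(7) by blast
  ultimately have "y1 = y2"
    using three_neighbours_in_W_imp_in_P[of x y y1 y2] assms(1,2,5,6) \<open>y1 \<in> W\<close> \<open>y2 \<in> W\<close>
      \<open>(x, y1) \<in> E\<close> \<open>(x, y2) \<in> E\<close> by blast
  then show "p \<in> comp_minus V E x q"
    using p_y1 y2_q_side by simp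
qed

lemma nearest_in_P_step:
  assumes "q \<in> P" "x \<in> comp_minus V E q v" "x \<in> W" "x \<notin> P"
    and free: "P \<inter> comp_minus V E q v \<inter> comp_minus V E x q = {}"
    and z: "z \<in> P \<inter> comp_minus V E q v"
  obtains y where "y \<in> comp_minus V E q v" "y \<in> W"
    "P \<inter> comp_minus V E q v \<inter> comp_minus V E y q = {}"
    "comp_minus V E x q \<subset> comp_minus V E y q"
proof -
  have "q \<in> W" "z \<in> W"
    using assms(1) z P_subset_W by auto
  have "x \<in> V" "q \<in> V - {x}"
    using assms(2) comp_minus_subset[of V E q v] \<open>q \<in> W\<close> W_subset_V by auto
  have q_side: "q \<in> comp_minus V E x q"
    using \<open>q \<in> V - {x}\<close> by (rule self_in_comp_minus)
  have "z \<noteq> x"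
    using z assms(4) by blast
  then obtain y where "y \<in> W" and xy: "(x, y) \<in> E" and zy: "z \<in> comp_minus V E x y"
    using neighbour_in_W_towards[OF assms(3) \<open>z \<in> W\<close>] by blast
  have "y \<in> V - {x}"
    using self_in_comp_minus_if_mem[OF zy] comp_minus_subset[of V E x y] by blast
  have y_not_q_side: "y \<notin> comp_minus V E x q"
  proof
    assume "y \<in> comp_minus V E x q"
    then have "comp_minus V E x y = comp_minus V E x q"
      by (rule comp_minus_eq_if_mem)
    then show False
      using zy z free by blast
  qed
  have grow: "comp_minus V E x q \<subset> comp_minus V E y x"
    using comp_minus_psubset_swap[OF \<open>x \<in> V\<close> \<open>y \<in> V - {x}\<close> \<open>q \<in> V - {x}\<close> y_not_q_side] .
  then have "q \<in> comp_minus V E y x"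
    using q_side by blast
  then have "comp_minus V E y q = comp_minus V E y x"
    by (rule comp_minus_eq_if_mem)
  moreover have "y \<in> comp_minus V E q v"
    using comp_minus_edge_closed[OF assms(2) xy] q_side y_not_q_side by blast
  moreover have "P \<inter> comp_minus V E q v \<inter> comp_minus V E y x = {}"
    using P_outside_branch_of_non_branching[OF assms(3,4) \<open>q \<in> W\<close> _ xy \<open>y \<in> W\<close> y_not_q_side]
      \<open>q \<in> V - {x}\<close> free by blast
  ultimately show ?thesis
    using that \<open>y \<in> W\<close> grow by simp
qed

lemma nearest_in_P:
  assumes "q \<in> P" "z \<in> P \<inter> comp_minus V E q v"
  obtains x where "x \<in> P \<inter> comp_minus V E q v"
    "P \<inter> comp_minus V E q v \<inter> comp_minus V E x q = {}"
proof -
  let ?C = "comp_minus V E q v"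
  let ?free = "\<lambda>x. x \<in> ?C \<and> x \<in> W \<and> P \<inter> ?C \<inter> comp_minus V E x q = {}"
  have "q \<in> W" "z \<in> W"
    using assms P_subset_W by auto
  have "z \<noteq> q"
    using assms(2) comp_minus_subset[of V E q v] by blast
  then obtain a where "a \<in> W" and qa: "(q, a) \<in> E" and "z \<in> comp_minus V E q a"
    using neighbour_in_W_towards[OF \<open>q \<in> W\<close> \<open>z \<in> W\<close>] by blast
  then have "comp_minus V E q a = ?C"
    using assms(2) comp_minus_eq_if_mem by (metis IntD2)
  moreover have "a \<in> comp_minus V E q a"
    using \<open>z \<in> comp_minus V E q a\<close> by (rule self_in_comp_minus_if_mem)
  moreover have "comp_minus V E a q \<inter> comp_minus V E q a = {}"
    using comp_minus_edge_disjoint[OF qa] by blast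
  ultimately have free_a: "?free a"
    using \<open>a \<in> W\<close> by blast
  have "card (comp_minus V E x q) \<le> card V" for x
    by (rule card_mono[OF finite_V]) (use comp_minus_subset[of V E x q] in blast)
  then have "\<forall>x. ?free x \<longrightarrow> card (comp_minus V E x q) < Suc (card V)"
    by (simp add: le_imp_less_Suc)
  then obtain x where x: "?free x"
    and farthest: "\<forall>y. ?free y \<longrightarrow> card (comp_minus V E y q) \<le> card (comp_minus V E x q)"
    using ex_has_greatest_nat[of ?free a "\<lambda>x. card (comp_minus V E x q)", OF free_a] by blast
  have "x \<in> P"
  proof (rule ccontr)
    assume "x \<notin> P"
    with x obtain y where "y \<in> ?C" "y \<in> W" "P \<inter> ?C \<inter> comp_minus V E y q = {}"
      and "comp_minus V E x q \<subset> comp_minus V E y q"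
      using nearest_in_P_step[OF assms(1) _ _ _ _ assms(2)] by blast
    then have "card (comp_minus V E y q) \<le> card (comp_minus V E x q)"
      and "card (comp_minus V E x q) < card (comp_minus V E y q)"
      using farthest psubset_card_mono[OF finite_comp_minus] by blast+
    then show False
      by simp
  qed
  then show ?thesis
    using that x by blast
qed

lemma centroid_exists_if_heavy:
  assumes "q \<in> P" "v \<in> V - {q}" "card P < 2 * card (P \<inter> comp_minus V E q v)"
  shows "\<exists>u\<in>V. is_centroid V E P u"
  using assms
proof (induction "card (comp_minus V E q v)" arbitrary: q v rule: less_induct)
  case less
  have "finite P"
    by (rule finite_subset[OF _ finite_V]) (use P_subset_W W_subset_V in blast)
  have "P \<inter> comp_minus V E q v \<noteq> {}"
    using less.prems(3) by (metis card.empty mult_0_right not_less_zero)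
  then obtain z where "z \<in> P \<inter> comp_minus V E q v"
    by blast
  then obtain x where x: "x \<in> P \<inter> comp_minus V E q v"
    and nearest: "P \<inter> comp_minus V E q v \<inter> comp_minus V E x q = {}"
    using nearest_in_P[OF less.prems(1)] by blast
  have "x \<in> V" "q \<in> V - {x}"
    using x comp_minus_subset[of V E q v] less.prems(1) P_subset_W W_subset_V by auto
  show ?case
  proof (cases "is_centroid V E P x")
    case True
    then show ?thesis
      using \<open>x \<in> V\<close> by blast
  next
    case False
    then obtain b where b: "b \<in> V - {x}" and heavy: "card P < 2 * card (P \<inter> comp_minus V E x b)"
      using x unfolding is_centroid_def by (auto simp: not_le)
    have "q \<notin> comp_minus V E x b"
    proof
      assume "q \<in> comp_minus V E x b"
      then have "comp_minus V E x q = comp_minus V E x b"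
        by (rule comp_minus_eq_if_mem)
      moreover have "(P \<inter> comp_minus V E x b) \<inter> (P \<inter> comp_minus V E q v) \<noteq> {}"
        using heavy_subsets_intersect[OF \<open>finite P\<close> Int_lower1 Int_lower1 heavy less.prems(3)] .
      ultimately show False
        using nearest by blast
    qed
    then have "comp_minus V E x b \<subset> comp_minus V E q x"
      by (rule comp_minus_psubset_swap[OF \<open>x \<in> V\<close> \<open>q \<in> V - {x}\<close> b])
    also have "comp_minus V E q x = comp_minus V E q v"
      using x by (intro comp_minus_eq_if_mem) blast
    finally have "card (comp_minus V E x b) < card (comp_minus V E q v)"
      using finite_comp_minus by (rule psubset_card_mono[rotated])
    moreover have "x \<in> P"
      using x by blast
    ultimately show ?thesis
      using b heavy by (rule less.hyps)
  qed
qed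

lemma centroid_exists:
  assumes "P \<noteq> {}"
  shows "\<exists>u\<in>V. is_centroid V E P u"
proof -
  obtain q where "q \<in> P"
    using assms by blast
  then have "q \<in> V"
    using P_subset_W W_subset_V by blast
  show ?thesis
  proof (cases "is_centroid V E P q")
    case True
    then show ?thesis
      using \<open>q \<in> V\<close> by blast
  next
    case False
    then obtain v where "v \<in> V - {q}" "card P < 2 * card (P \<inter> comp_minus V E q v)"
      using \<open>q \<in> P\<close> unfolding is_centroid_def by (auto simp: not_le)
    then show ?thesis
      using centroid_exists_if_heavy \<open>q \<in> P\<close> by blast
  qed
qed

end

lemma reachable_in_VQ_from_root:
  assumes "r \<in> V" "Q \<subseteq> V" "u \<in> VQ V E r Q"
  shows "reachable_in (VQ V E r Q) E r u"
proof -
  obtain q where q: "q \<in> Q" "q \<in> rooted_subtree V E r u"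
    using assms(3) unfolding VQ_def by blast
  have "q \<in> V"
    using q(1) assms(2) by blast
  obtain ps where ps: "walk_in V E ps" "hd ps = r" "last ps = q" "distinct ps"
    using reachable_in_V[OF assms(1) \<open>q \<in> V\<close>] by (rule reachable_in_distinct_walk)
  have "u \<in> set ps"
    using q(2) ps(1-3) unfolding rooted_subtree_def by blast
  then obtain ys zs where split: "ps = ys @ u # zs"
    by (meson split_list)
  have "z \<in> VQ V E r Q" if "z \<in> set ps" for z
  proof -
    have "z \<in> set xs" if "walk_in V E xs" "hd xs = r" "last xs = q" for xs
      using distinct_walk_mem_every_walk[OF ps \<open>z \<in> set ps\<close> that] .
    then have "q \<in> rooted_subtree V E r z"
      using \<open>q \<in> V\<close> unfolding rooted_subtree_def by blast
    moreover have "z \<in> V"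
      using ps(1) \<open>z \<in> set ps\<close> unfolding walk_in_def by blast
    ultimately show ?thesis
      using q(1) unfolding VQ_def by blast
  qed
  then have "set (ys @ [u]) \<subseteq> VQ V E r Q"
    using split by auto
  moreover have "walk_in V E (ys @ [u])"
  proof (rule walk_in_appendD1)
    show "walk_in V E ((ys @ [u]) @ zs)"
      using ps(1) split by simp
  qed simp
  ultimately have "reachable_in (VQ V E r Q) E (hd (ys @ [u])) (last (ys @ [u]))"
    by (metis walk_in_reachable_in walk_in_mono)
  moreover have "hd (ys @ [u]) = r"
    using ps(2) split by (cases ys) auto
  ultimately show ?thesis
    by simp
qed

lemma connected_VQ:
  assumes "r \<in> V" "Q \<subseteq> V"
  shows "connected_graph (VQ V E r Q) E"
  unfolding connected_graph_iff_reachable_in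
proof (intro ballI)
  fix u w
  assume "u \<in> VQ V E r Q" "w \<in> VQ V E r Q"
  then have "reachable_in (VQ V E r Q) E u r" "reachable_in (VQ V E r Q) E r w"
    using reachable_in_VQ_from_root[OF assms] reachable_in_sym[OF sym_E] by blast+
  then show "reachable_in (VQ V E r Q) E u w"
    by (rule reachable_in_trans)
qed

end

lemma Q_subset_VQ:
  assumes "Q \<subseteq> V"
  shows "Q \<subseteq> VQ V E r Q"
proof
  fix q
  assume "q \<in> Q"
  have "q \<in> set xs" if "walk_in V E xs" "last xs = q" for xs
    using that last_in_set unfolding walk_in_def by blast
  then have "q \<in> rooted_subtree V E r q"
    using \<open>q \<in> Q\<close> assms unfolding rooted_subtree_def by blast
  then show "q \<in> VQ V E r Q"
    using \<open>q \<in> Q\<close> assms unfolding VQ_def by blast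
qed

theorem mainTheorem6:
  fixes V :: "'a set" and E :: "'a rel" and r :: 'a and Q :: "'a set"
  assumes "is_tree V E" and "r \<in> V" and "Q \<subseteq> V" and "Q \<noteq> {}"
  shows "card {u\<in>V. is_centroid V E (Q \<union> AQ V E r Q) u} \<in> {1, 2}"
proof -
  interpret tree V E
    using assms(1) by unfold_locales
  let ?P = "Q \<union> AQ V E r Q" and ?W = "VQ V E r Q"
  have "?P \<subseteq> ?W"
    using Q_subset_VQ[OF assms(3)] unfolding AQ_def by blast
  moreover have "?W \<subseteq> V"
    unfolding VQ_def by blast
  moreover have "x \<in> ?P" if "x \<in> ?W" "3 \<le> deg_induced ?W E x" for x
    using that unfolding AQ_def by blast
  ultimately have "\<exists>u\<in>V. is_centroid V E ?P u"
    using centroid_exists connected_VQ[OF assms(2,3)] assms(4) by blast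
  then have "card {u\<in>V. is_centroid V E ?P u} \<noteq> 0"
    using finite_V by (auto simp: card_eq_0_iff)
  moreover have "card {u\<in>V. is_centroid V E ?P u} \<le> 2"
    using card_centroids_le_2 \<open>?P \<subseteq> ?W\<close> \<open>?W \<subseteq> V\<close> by blast
  ultimately show ?thesis
    by auto
qed

end
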